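(* Let $\mathcal D=\mathcal Z=\{0,1\}$, suppose Assumptions 1–4 hold, and suppose that $$4\,f_{0,0}(y_0)\,f_{1,1}(y_1)>\Big(\frac{\overline\lambda}{\underline\lambda}\Big)^{p+1}\big(f_{0,1}(y_0)+f_{1,0}(y_1)\big)^2$$ for Lebesgue-almost all $(y_0,y_1)\in\mathcal Y_0\times\mathcal Y_1$. Then for each $d\in\mathcal D$, $$\mathcal Y_d=\bigcup_{z\in\mathcal Z}\overline{\{y\in\mathbb R^p: f_{d,z}(y)>0\}}.$$
   Context: Setting: $\mathcal U\subset\mathbb R^p$ compact convex with piecewise $C^1$ boundary; $\mu$ a probability measure with support $\mathcal U$, absolutely continuous w.r.t. Lebesgue measure. Assumption 1 consists of (A1)–(A5): (A1) for each $d\in\mathcal D$, $U_d\mid X\sim\mu$ and $Y_d=q_d^\ast(U_d,X)$ for a function $q_d^\ast$ continuously differentiable in its first argument with derivative $Dq_d^\ast$ symmetric positive definite on $\mathrm{Int}(\mathcal U)\times\mathcal X$; (A2) $U_d$ independent of $Z$ given $X$; (A3) $D=\delta(Z,X,\nu)$; (A4) conditional on $(X,Z,\nu)$, the $(U_d)_d$ are identically distributed; (A5) observables are $Y:=Y_D,D,X,Z$. Everything is conditional on $X=x$, suppressed. $f_{d,z}(y):=\frac{\partial^p}{\partial y_1\cdots\partial y_p}\mathbb P(Y\le y,D=d\mid Z=z)$ (Lebesgue density of $B\mapsto\mathbb P(Y\in B,D=d\mid Z=z)$ on $\mathbb R^p$). $\mathcal Y_d$ is the support of the law of $Y_d$.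 $\overline\lambda>\underline\lambda>0$ are fixed constants. Assumption 2: $q^\ast\in(C^2(\mathcal U;\mathbb R^p))^2$ with each $Dq_d^\ast$ symmetric positive definite and eigenvalues in $(\underline\lambda,\overline\lambda)$. Assumption 3: each $\mathcal Y_d$ is convex compact with piecewise $C^2$ boundary. Assumption 4: $f_{d,z}$ is continuously differentiable on $\mathcal Y_d$ (up to the boundary). *)

theory Defs
  imports "HOL-Probability.Probability"
begin

definition support_of :: "'a::topological_space measure \<Rightarrow> 'a set" where
  "support_of M = {x. \<forall>S. open S \<longrightarrow> x \<in> S \<longrightarrow> emeasure M S > 0}"

definition C1_on :: "'a::euclidean_space set \<Rightarrow> ('a \<Rightarrow> 'b::real_normed_vector) \<Rightarrow> bool" where
  "C1_on S f \<longleftrightarrow> (\<exists>Df::'a \<Rightarrow> ('a \<Rightarrow>\<^sub>L 'b).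
      (\<forall>x\<in>S. (f has_derivative blinfun_apply (Df x)) (at x within S)) \<and> continuous_on S Df)"

definition C2_on :: "'a::euclidean_space set \<Rightarrow> ('a \<Rightarrow> 'b::real_normed_vector) \<Rightarrow> bool" where
  "C2_on S f \<longleftrightarrow> (\<exists>Df::'a \<Rightarrow> ('a \<Rightarrow>\<^sub>L 'b).
      (\<forall>x\<in>S. (f has_derivative blinfun_apply (Df x)) (at x within S)) \<and> C1_on S Df)"

text \<open>Piecewise C^1 / C^2 boundary: the boundary is a finite union of compact pieces of
  regular C^k hypersurfaces (zero sets of C^k functions with non-vanishing derivative).\<close>
definition piecewise_C1_boundary :: "'a::euclidean_space set \<Rightarrow> bool" where
  "piecewise_C1_boundary S \<longleftrightarrow> (\<exists>(n::nat) V (g::nat \<Rightarrow> 'a \<Rightarrow> real) K.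
      (\<forall>i<n. open (V i) \<and> C1_on (V i) (g i)
          \<and> (\<forall>x\<in>V i. \<forall>Dg. (g i has_derivative Dg) (at x) \<longrightarrow> Dg \<noteq> (\<lambda>h. 0))
          \<and> compact (K i) \<and> K i \<subseteq> {x\<in>V i. g i x = 0})
      \<and> frontier S = (\<Union>i<n. K i))"

definition piecewise_C2_boundary :: "'a::euclidean_space set \<Rightarrow> bool" where
  "piecewise_C2_boundary S \<longleftrightarrow> (\<exists>(n::nat) V (g::nat \<Rightarrow> 'a \<Rightarrow> real) K.
      (\<forall>i<n. open (V i) \<and> C2_on (V i) (g i)
          \<and> (\<forall>x\<in>V i. \<forall>Dg. (g i has_derivative Dg) (at x) \<longrightarrow> Dg \<noteq> (\<lambda>h. 0))
          \<and> compact (K i) \<and> K i \<subseteq> {x\<in>V i. g i x = 0})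
      \<and> frontier S = (\<Union>i<n. K i))"

definition sym_pd_eig_between :: "real \<Rightarrow> real \<Rightarrow> ('a::euclidean_space \<Rightarrow>\<^sub>L 'a) \<Rightarrow> bool" where
  "sym_pd_eig_between a b L \<longleftrightarrow>
     (\<forall>v w. blinfun_apply L v \<bullet> w = v \<bullet> blinfun_apply L w)
   \<and> (\<forall>v. v \<noteq> 0 \<longrightarrow> blinfun_apply L v \<bullet> v > 0)
   \<and> (\<forall>l v. v \<noteq> 0 \<longrightarrow> blinfun_apply L v = l *\<^sub>R v \<longrightarrow> a < l \<and> l < b)"

definition cond_ident_distr :: "'o measure \<Rightarrow> 'o measure \<Rightarrow> ('o \<Rightarrow> 'a::topological_space)
    \<Rightarrow> ('o \<Rightarrow> 'a) \<Rightarrow> bool" where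
  "cond_ident_distr M F X1 X2 \<longleftrightarrow> (\<forall>A\<in>sets borel. AE \<omega> in M.
      real_cond_exp M F (\<lambda>\<omega>. indicator A (X1 \<omega>)) \<omega> = real_cond_exp M F (\<lambda>\<omega>. indicator A (X2 \<omega>)) \<omega>)"

end

theory Submission
  imports Defs
begin

(*
  \<Y> d is the support of the law of q d (U d). The inclusion from right to left holds because
  f d z vanishes off this closed set. Conversely, a derivative of q d that is uniformly positive
  definite on the convex set \<U> makes q d inverse Lipschitz, so q d cannot map the absolutely
  continuous law of U d onto a null set: a nonempty \<Y> d is a convex set of positive measure,
  hence the closure of its nonempty interior. If \<Y> 0 and \<Y> 1 are both nonempty, the assumed
  inequality forces f 0 0 y0 * f 1 1 y1 > 0 for almost every (y0, y1) in \<Y> 0 \<times> \<Y> 1, and since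
  nonempty open sets have positive measure, {f d d > 0} is dense in \<Y> d. If \<Y> (1 - d) is empty,
  then D = d almost surely, and by the independence of U d and Z, f d 0 is a density of
  P(Z = 0) times the law of q d (U d), so {f d 0 > 0} is dense in its support \<Y> d.
*)

section \<open>Supports of measures\<close>

lemma closed_support_of: "closed (support_of N)"
proof -
  have "- support_of N = \<Union>{S. open S \<and> emeasure N S = 0}"
    unfolding support_of_def by (auto simp: not_less)
  then show ?thesis by (auto simp: closed_def)
qed

lemma AE_in_support_of:
  fixes N :: "'a::second_countable_topology measure"
  assumes "sets N = sets borel"
  shows "AE x in N. x \<in> support_of N"
proof -
  let ?F = "{S. open S \<and> emeasure N S = 0}"
  have Compl_eq: "- support_of N = \<Union>?F"
    unfolding support_of_def by (auto simp: not_less)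
  obtain F' where F': "F' \<subseteq> ?F" "countable F'" "\<Union>F' = \<Union>?F"
    using Lindelof[of ?F] by auto
  have "(\<Union>S\<in>F'. S) \<in> null_sets N"
    using F'(1) assms by (intro null_sets_UN'[OF F'(2)]) (auto simp: null_sets_def)
  from AE_not_in[OF this] show ?thesis
    by (rule eventually_mono) (use Compl_eq F'(3) in blast)
qed

lemma AE_in_support_of_distr_measurable:
  fixes g :: "'a \<Rightarrow> 'b::second_countable_topology"
  assumes "g \<in> borel_measurable M"
  shows "AE \<omega> in M. g \<omega> \<in> support_of (distr M borel g)"
proof -
  have "AE x in distr M borel g. x \<in> support_of (distr M borel g)"
    by (rule AE_in_support_of) simp
  then show ?thesis
    using closed_support_of by (subst (asm) AE_distr_iff[OF assms]) (auto intro: borel_closed)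
qed

(* No measurability of g is needed: distr falls back to the zero measure only when the
   preimage set function fails to be a measure. *)
lemma emeasure_distr_of_nonzero:
  assumes "emeasure (distr M borel g) A \<noteq> 0" "B \<in> sets borel"
  shows "emeasure (distr M borel g) B = emeasure M (g -` B \<inter> space M)"
  using assms unfolding distr_def emeasure_measure_of_conv
  by (auto simp: sets.sigma_sets_eq split: if_splits)

lemma emeasure_preimage_pos_of_mem_support_distr:
  assumes "y \<in> support_of (distr M borel g)" "open B" "y \<in> B"
  shows "0 < emeasure M {\<omega> \<in> space M. g \<omega> \<in> B}"
proof -
  have "0 < emeasure (distr M borel g) B"
    using assms unfolding support_of_def by blast
  moreover have "g -` B \<inter> space M = {\<omega> \<in> space M. g \<omega> \<in> B}"
    by blast
  ultimately show ?thesis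
    using emeasure_distr_of_nonzero[of M g B B] assms(2) by simp
qed

lemma (in prob_space) AE_in_support_of_distr:
  fixes g :: "'a \<Rightarrow> 'b::second_countable_topology"
  assumes "support_of (distr M borel g) \<noteq> {}"
  shows "AE \<omega> in M. g \<omega> \<in> support_of (distr M borel g)"
proof -
  let ?S = "support_of (distr M borel g)"
  have S_borel: "?S \<in> sets borel" and Compl_borel: "- ?S \<in> sets borel"
    by (simp_all add: closed_support_of borel_closed borel_open open_Compl)
  obtain y where "y \<in> ?S"
    using assms by blast
  then have "emeasure (distr M borel g) UNIV \<noteq> 0"
    unfolding support_of_def by force
  then have preimage: "emeasure (distr M borel g) B = emeasure M (g -` B \<inter> space M)"
    if "B \<in> sets borel" for B
    using emeasure_distr_of_nonzero that by blast
  have "emeasure (distr M borel g) {x \<in> space (distr M borel g). x \<notin> ?S} = 0"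
    by (rule emeasure_eq_0_AE) (simp add: AE_in_support_of)
  then have "emeasure (distr M borel g) (- ?S) = 0"
    by (simp add: Compl_eq)
  moreover have "emeasure (distr M borel g) UNIV = 1"
    using preimage[of UNIV] by (simp add: emeasure_space_1)
  ultimately have "emeasure (distr M borel g) ?S = 1"
    using emeasure_compl[of "- ?S" "distr M borel g"] Compl_borel by simp
  \<comment> \<open>g need not be measurable, so the null preimage of the complement of ?S need not
    be an event; the preimage of ?S is one, having measure 1.\<close>
  then have "emeasure M (g -` ?S \<inter> space M) = 1"
    using preimage[OF S_borel] by simp
  then have "prob (g -` ?S \<inter> space M) = 1"
    by (simp add: emeasure_eq_measure)
  from AE_prob_1[OF this] show ?thesis
    by (rule eventually_mono) simp
qed

section \<open>Inverse Lipschitz maps\<close>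

lemma negligible_of_inverse_Lipschitz_image:
  fixes q :: "'a::euclidean_space \<Rightarrow> 'b::euclidean_space"
  assumes "DIM('b) \<le> DIM('a)" "negligible (q ` T)"
    and "c > 0" "\<And>u v. u \<in> T \<Longrightarrow> v \<in> T \<Longrightarrow> c * norm (u - v) \<le> norm (q u - q v)"
  shows "negligible T"
proof -
  have inj: "inj_on q T"
  proof (rule inj_onI)
    fix u v assume "u \<in> T" "v \<in> T" "q u = q v"
    then have "c * norm (u - v) \<le> 0"
      using assms(4) by fastforce
    then show "u = v"
      using assms(3) by (simp add: mult_le_0_iff)
  qed
  have "negligible (inv_into T q ` q ` T)"
  proof (rule negligible_locally_Lipschitz_image[OF assms(1,2)])
    fix y assume "y \<in> q ` T"
    then obtain a where a: "a \<in> T" "y = q a" by blast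
    have "norm (inv_into T q z - inv_into T q y) \<le> 1 / c * norm (z - y)" if "z \<in> q ` T" for z
    proof -
      obtain b where b: "b \<in> T" "z = q b" using \<open>z \<in> q ` T\<close> by blast
      then show ?thesis
        using a inj assms(3) assms(4)[of b a] by (simp add: field_simps)
    qed
    then show "\<exists>G B. open G \<and> y \<in> G \<and>
        (\<forall>z\<in>q ` T \<inter> G. norm (inv_into T q z - inv_into T q y) \<le> B * norm (z - y))"
      by blast
  qed
  then show ?thesis
    using inj by simp
qed

lemma C1_on_imp_continuous_on:
  assumes "C1_on S f"
  shows "continuous_on S f"
proof -
  obtain Df where "\<And>x. x \<in> S \<Longrightarrow> (f has_derivative blinfun_apply (Df x)) (at x within S)"
    using assms unfolding C1_on_def by blast
  then show ?thesis
    by (rule has_derivative_continuous_on)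
qed

lemma uniformly_coercive_on_compact:
  fixes L :: "'a::euclidean_space \<Rightarrow> ('a \<Rightarrow>\<^sub>L 'a)"
  assumes "compact U" "continuous_on U L"
    and "\<And>u x. u \<in> U \<Longrightarrow> x \<noteq> 0 \<Longrightarrow> L u x \<bullet> x > 0"
  shows "\<exists>c>0. \<forall>u\<in>U. \<forall>x. c * (norm x)\<^sup>2 \<le> L u x \<bullet> x"
proof (cases "U = {}")
  case True
  then show ?thesis by (auto intro: exI[of _ 1])
next
  case False
  let ?K = "U \<times> sphere (0::'a) 1"
  let ?\<phi> = "\<lambda>p. L (fst p) (snd p) \<bullet> snd p"
  have K_compact: "compact ?K"
    using assms(1) by (simp add: compact_Times)
  have "(SOME i. i \<in> Basis) \<in> sphere (0::'a) 1"
    using norm_Basis[OF SOME_Basis] by simp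
  then have K_nonempty: "?K \<noteq> {}"
    using False by blast
  have \<phi>_cont: "continuous_on ?K ?\<phi>"
  proof -
    have "continuous_on ?K (\<lambda>p. L (fst p))"
      by (rule continuous_on_compose2[OF assms(2) continuous_on_fst]) auto
    then show ?thesis
      by (intro continuous_on_inner continuous_on_snd continuous_on_id
          bounded_bilinear.continuous_on[OF bounded_bilinear_blinfun_apply])
  qed
  obtain p where p: "p \<in> ?K" "\<And>r. r \<in> ?K \<Longrightarrow> ?\<phi> p \<le> ?\<phi> r"
    using continuous_attains_inf[OF K_compact K_nonempty \<phi>_cont] by blast
  have "fst p \<in> U" "snd p \<noteq> 0"
    using p(1) by (auto simp: mem_Times_iff)
  then have "?\<phi> p > 0"
    by (rule assms(3))
  moreover have "?\<phi> p * (norm x)\<^sup>2 \<le> L u x \<bullet> x" if "u \<in> U" for u x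
  proof (cases "x = 0")
    case False
    let ?y = "x /\<^sub>R norm x"
    have "?\<phi> p \<le> L u ?y \<bullet> ?y"
      using p(2)[of "(u, ?y)"] that False by simp
    also have "\<dots> = (L u x \<bullet> x) / (norm x)\<^sup>2"
      by (simp add: blinfun.scaleR_right power2_eq_square divide_inverse)
    finally show ?thesis
      using False by (simp add: field_simps)
  qed simp
  ultimately show ?thesis
    by blast
qed

lemma inverse_Lipschitz_of_coercive_derivative:
  fixes q :: "'a::euclidean_space \<Rightarrow> 'a"
  assumes "convex U"
    and deriv: "\<And>u. u \<in> U \<Longrightarrow> (q has_derivative L u) (at u within U)"
    and coercive: "\<And>u x. u \<in> U \<Longrightarrow> c * (norm x)\<^sup>2 \<le> L u x \<bullet> x"
    and "u \<in> U" "v \<in> U"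
  shows "c * norm (u - v) \<le> norm (q u - q v)"
proof (cases "u = v")
  case False
  define w where "w = u - v"
  define l where "l = (\<lambda>t::real. v + t *\<^sub>R w)"
  have l_in_U: "l t \<in> U" if "t \<in> {0..1}" for t
  proof -
    have "l t = (1 - t) *\<^sub>R v + t *\<^sub>R u"
      by (simp add: l_def w_def algebra_simps)
    then show ?thesis
      using assms(1,4,5) that by (simp add: convex_alt)
  qed
  have "((\<lambda>t. q (l t) \<bullet> w) has_derivative (\<lambda>s. L (l t) (s *\<^sub>R w) \<bullet> w)) (at t within {0..1})"
    if "t \<in> {0..1}" for t
  proof -
    have "(l has_derivative (\<lambda>s. s *\<^sub>R w)) (at t within {0..1})"
      unfolding l_def by (auto intro!: derivative_eq_intros)
    moreover have "(q has_derivative L (l t)) (at (l t) within l ` {0..1})"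
      using deriv[OF l_in_U[OF that]] by (rule has_derivative_subset) (use l_in_U in auto)
    ultimately have "((q \<circ> l) has_derivative (L (l t) \<circ> (\<lambda>s. s *\<^sub>R w))) (at t within {0..1})"
      by (rule diff_chain_within)
    from has_derivative_inner_left[OF this, of w] show ?thesis
      by (simp add: o_def)
  qed
  then obtain t where t: "t \<in> {0<..<1}"
    and mvt: "q (l 1) \<bullet> w - q (l 0) \<bullet> w = L (l t) ((1 - 0) *\<^sub>R w) \<bullet> w"
    using mvt_simple[of 0 1 "\<lambda>t. q (l t) \<bullet> w" "\<lambda>t s. L (l t) (s *\<^sub>R w) \<bullet> w"] by auto
  have "c * (norm w)\<^sup>2 \<le> (q u - q v) \<bullet> w"
    using mvt coercive[OF l_in_U, of t w] t by (simp add: l_def w_def inner_diff_left)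
  also have "\<dots> \<le> norm (q u - q v) * norm w"
    by (rule norm_cauchy_schwarz)
  finally show ?thesis
    using False by (simp add: w_def power2_eq_square)
qed simp

lemma (in prob_space) support_of_distr_not_negligible:
  fixes V :: "'a \<Rightarrow> 'b::euclidean_space" and q :: "'b \<Rightarrow> 'b"
  assumes V: "V \<in> borel_measurable M" and V_in_U: "AE \<omega> in M. V \<omega> \<in> U"
    and ac: "absolutely_continuous lborel (distr M borel V)" and "closed U" and "continuous_on U q"
    and "c > 0" "\<And>u v. u \<in> U \<Longrightarrow> v \<in> U \<Longrightarrow> c * norm (u - v) \<le> norm (q u - q v)"
    and nonempty: "support_of (distr M borel (\<lambda>\<omega>. q (V \<omega>))) \<noteq> {}"
  shows "\<not> negligible (support_of (distr M borel (\<lambda>\<omega>. q (V \<omega>))))"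
proof
  let ?Y = "support_of (distr M borel (\<lambda>\<omega>. q (V \<omega>)))"
  assume "negligible ?Y"
  define T where "T = U \<inter> q -` ?Y"
  have T_borel: "T \<in> sets borel"
    unfolding T_def using assms(4,5) closed_support_of by (intro borel_closed continuous_closed_preimage)
  have "negligible (q ` T)"
    using \<open>negligible ?Y\<close> by (rule negligible_subset) (auto simp: T_def)
  then have "negligible T"
    using assms(6,7) by (intro negligible_of_inverse_Lipschitz_image[of q T c]) (auto simp: T_def)
  then have "T \<in> null_sets (distr M borel V)"
    using ac T_borel unfolding absolutely_continuous_def
    by (auto simp: negligible_iff_null_sets null_sets_completion_iff)
  then have "AE x in distr M borel V. x \<notin> T"
    by (rule AE_not_in)
  moreover have "AE x in distr M borel V. x \<in> T"
  proof (subst AE_distr_iff[OF V])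
    show "{x \<in> space borel. x \<in> T} \<in> sets borel"
      using T_borel by simp
    show "AE \<omega> in M. V \<omega> \<in> T"
      using V_in_U AE_in_support_of_distr[OF nonempty] by eventually_elim (simp add: T_def)
  qed
  ultimately have "AE x in distr M borel V. False"
    by eventually_elim simp
  then show False
    using prob_space.AE_False[OF prob_space_distr[OF V]] by simp
qed

lemma (in prob_space) interior_support_of_distr_nonempty:
  fixes V :: "'a \<Rightarrow> 'b::euclidean_space" and q :: "'b \<Rightarrow> 'b" and L :: "'b \<Rightarrow> ('b \<Rightarrow>\<^sub>L 'b)"
  assumes V: "V \<in> borel_measurable M" and V_in_U: "AE \<omega> in M. V \<omega> \<in> U"
    and ac: "absolutely_continuous lborel (distr M borel V)" and "compact U" "convex U"
    and deriv: "\<And>u. u \<in> U \<Longrightarrow> (q has_derivative L u) (at u within U)"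
    and "continuous_on U L" and pos_def: "\<And>u x. u \<in> U \<Longrightarrow> x \<noteq> 0 \<Longrightarrow> L u x \<bullet> x > 0"
    and convex: "convex (support_of (distr M borel (\<lambda>\<omega>. q (V \<omega>))))"
    and nonempty: "support_of (distr M borel (\<lambda>\<omega>. q (V \<omega>))) \<noteq> {}"
  shows "interior (support_of (distr M borel (\<lambda>\<omega>. q (V \<omega>)))) \<noteq> {}"
proof -
  obtain c where "c > 0" and coercive: "\<And>u x. u \<in> U \<Longrightarrow> c * (norm x)\<^sup>2 \<le> L u x \<bullet> x"
    using uniformly_coercive_on_compact[OF assms(4,7) pos_def] by blast
  have "continuous_on U q"
    using deriv by (rule has_derivative_continuous_on)
  moreover have "c * norm (u - v) \<le> norm (q u - q v)" if "u \<in> U" "v \<in> U" for u v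
    using inverse_Lipschitz_of_coercive_derivative[OF assms(5) deriv coercive that] .
  ultimately have "\<not> negligible (support_of (distr M borel (\<lambda>\<omega>. q (V \<omega>))))"
    using support_of_distr_not_negligible[OF V V_in_U ac compact_imp_closed[OF assms(4)]]
      \<open>c > 0\<close> nonempty by blast
  then show ?thesis
    using negligible_convex_interior[OF convex] by blast
qed

section \<open>Positivity sets of densities\<close>

lemma AE_lborel_ex_in_open:
  fixes G :: "'a::euclidean_space set"
  assumes "AE x in lborel. P x" "open G" "G \<noteq> {}"
  shows "\<exists>x\<in>G. P x"
proof (rule ccontr)
  assume "\<not> (\<exists>x\<in>G. P x)"
  moreover obtain N where "{x. \<not> P x} \<subseteq> N" "N \<in> null_sets lborel"
    using assms(1) by (auto elim!: AE_E simp: null_sets_def)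
  ultimately have "G \<in> null_sets lebesgue"
    by (blast intro: null_sets_completionI null_sets_completion_subset)
  then show False
    using open_not_negligible assms(2,3) by (auto simp: negligible_iff_null_sets)
qed

lemma convex_subset_closure_if_dense_in_interior:
  fixes S :: "'a::euclidean_space set"
  assumes "convex S" "interior S \<noteq> {}"
    and dense: "\<And>G. open G \<Longrightarrow> G \<noteq> {} \<Longrightarrow> G \<subseteq> interior S \<Longrightarrow> \<exists>x\<in>G. P x"
  shows "S \<subseteq> closure {x. P x}"
proof
  fix y assume "y \<in> S"
  then have y: "y \<in> closure (interior S)"
    using convex_closure_interior[OF assms(1,2)] closure_subset by blast
  show "y \<in> closure {x. P x}"
    unfolding closure_approachable
  proof (intro allI impI)
    fix r :: real assume "r > 0"
    then have "ball y r \<inter> interior S \<noteq> {}"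
      using closure_approachableD[OF y] by fastforce
    then obtain x where "x \<in> ball y r" "P x"
      using dense[OF _ _ Int_lower2] by blast
    then show "\<exists>x\<in>{x. P x}. dist x y < r"
      by (auto simp: dist_commute)
  qed
qed

lemma subset_closure_of_AE_product:
  fixes S :: "'a::euclidean_space set" and T :: "'b::euclidean_space set"
  assumes AE: "AE p in lborel. fst p \<in> S \<and> snd p \<in> T \<longrightarrow> P (fst p) \<and> Q (snd p)"
    and "convex S" "convex T" "interior S \<noteq> {}" "interior T \<noteq> {}"
  shows "S \<subseteq> closure {x. P x}" "T \<subseteq> closure {y. Q y}"
proof -
  have ex: "\<exists>p\<in>A \<times> B. P (fst p) \<and> Q (snd p)"
    if AB: "open A" "open B" "A \<noteq> {}" "B \<noteq> {}" "A \<subseteq> S" "B \<subseteq> T" for A B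
  proof -
    have "A \<times> B \<noteq> {}"
      using AB(3,4) by blast
    then obtain p where "p \<in> A \<times> B" "fst p \<in> S \<and> snd p \<in> T \<longrightarrow> P (fst p) \<and> Q (snd p)"
      using AE_lborel_ex_in_open[OF AE open_Times[OF AB(1,2)]] by blast
    then show ?thesis
      using AB(5,6) by (auto simp: mem_Times_iff)
  qed
  show "S \<subseteq> closure {x. P x}"
  proof (rule convex_subset_closure_if_dense_in_interior[OF assms(2,4)])
    fix G assume "open G" "G \<noteq> {}" "G \<subseteq> interior S"
    moreover have "G \<subseteq> S"
      using \<open>G \<subseteq> interior S\<close> interior_subset by blast
    ultimately show "\<exists>x\<in>G. P x"
      using ex[of G "interior T"] assms(5) interior_subset by auto
  qed
  show "T \<subseteq> closure {y. Q y}"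
  proof (rule convex_subset_closure_if_dense_in_interior[OF assms(3,5)])
    fix G assume "open G" "G \<noteq> {}" "G \<subseteq> interior T"
    moreover have "G \<subseteq> T"
      using \<open>G \<subseteq> interior T\<close> interior_subset by blast
    ultimately show "\<exists>y\<in>G. Q y"
      using ex[of "interior S" G] assms(4) interior_subset by auto
  qed
qed

lemma subset_closure_diagonal_density:
  fixes f :: "nat \<Rightarrow> nat \<Rightarrow> 'a::euclidean_space \<Rightarrow> real" and S :: "nat \<Rightarrow> 'a set" and K :: real
  assumes ineq: "AE p in lborel. fst p \<in> S 0 \<and> snd p \<in> S 1 \<longrightarrow>
      4 * f 0 0 (fst p) * f 1 1 (snd p) > K * (f 0 1 (fst p) + f 1 0 (snd p))\<^sup>2"
    and "K \<ge> 0" and nonneg: "\<And>y. f 0 0 y \<ge> 0" "\<And>y. f 1 1 y \<ge> 0"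
    and "\<And>d. d \<in> {0,1} \<Longrightarrow> convex (S d) \<and> interior (S d) \<noteq> {}"
    and "d \<in> {0,1}"
  shows "S d \<subseteq> closure {y. f d d y > 0}"
proof -
  have "AE p in lborel. fst p \<in> S 0 \<and> snd p \<in> S 1 \<longrightarrow> f 0 0 (fst p) > 0 \<and> f 1 1 (snd p) > 0"
    using ineq
  proof eventually_elim
    case (elim p)
    have "0 \<le> K * (f 0 1 (fst p) + f 1 0 (snd p))\<^sup>2"
      using \<open>K \<ge> 0\<close> by simp
    then have "fst p \<in> S 0 \<and> snd p \<in> S 1 \<longrightarrow> 0 < 4 * f 0 0 (fst p) * f 1 1 (snd p)"
      using elim by linarith
    then show ?case
      using nonneg(1)[of "fst p"] nonneg(2)[of "snd p"] by (auto simp: zero_less_mult_iff)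
  qed
  from subset_closure_of_AE_product[OF this] show ?thesis
    using assms(5) \<open>d \<in> {0,1}\<close> by fastforce
qed

lemma mem_closure_pos_if_nn_integral_ball:
  fixes f :: "'a::euclidean_space \<Rightarrow> real"
  assumes "\<And>r. r > 0 \<Longrightarrow> (\<integral>\<^sup>+ y. indicator (ball x r) y * ennreal (f y) \<partial>lborel) \<noteq> 0"
  shows "x \<in> closure {y. f y > 0}"
  unfolding closure_approachable
proof (intro allI impI)
  fix r :: real assume "r > 0"
  show "\<exists>y\<in>{y. f y > 0}. dist y x < r"
  proof (rule ccontr)
    assume "\<not> ?thesis"
    then have "indicator (ball x r) y * ennreal (f y) = 0" for y
      by (cases "y \<in> ball x r") (auto simp: dist_commute ennreal_eq_0_iff not_less)
    then have "(\<integral>\<^sup>+ y. indicator (ball x r) y * ennreal (f y) \<partial>lborel) = 0"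
      by (simp only:) simp
    then show False
      using assms[OF \<open>r > 0\<close>] by blast
  qed
qed

lemma (in prob_space) prob_continuous_image_indep:
  fixes V :: "'a \<Rightarrow> 'b::euclidean_space" and q :: "'b \<Rightarrow> 'c::topological_space"
  assumes V: "V \<in> borel_measurable M" and V_in_U: "AE \<omega> in M. V \<omega> \<in> U"
    and "closed U" "continuous_on U q" "open B"
    and image_event: "{\<omega> \<in> space M. q (V \<omega>) \<in> B} \<in> events"
    and Z_event: "{\<omega> \<in> space M. Z \<omega> \<in> C} \<in> events"
    and indep: "\<And>A. A \<in> sets borel \<Longrightarrow>
      prob {\<omega> \<in> space M. V \<omega> \<in> A \<and> Z \<omega> \<in> C}
        = prob {\<omega> \<in> space M. V \<omega> \<in> A} * prob {\<omega> \<in> space M. Z \<omega> \<in> C}"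
  shows "prob {\<omega> \<in> space M. q (V \<omega>) \<in> B \<and> Z \<omega> \<in> C}
    = prob {\<omega> \<in> space M. q (V \<omega>) \<in> B} * prob {\<omega> \<in> space M. Z \<omega> \<in> C}"
proof -
  define A where "A = U - (U \<inter> q -` (- B))"
  have A_borel: "A \<in> sets borel"
    unfolding A_def using assms(3-5)
    by (intro sets.Diff borel_closed continuous_closed_preimage) auto
  have A_AE_eq: "AE \<omega> in M. V \<omega> \<in> A \<longleftrightarrow> q (V \<omega>) \<in> B"
    using V_in_U by eventually_elim (auto simp: A_def)
  have V_A_event: "{\<omega> \<in> space M. V \<omega> \<in> A} \<in> events"
    using V A_borel by measurable
  have "prob {\<omega> \<in> space M. V \<omega> \<in> A} = prob {\<omega> \<in> space M. q (V \<omega>) \<in> B}"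
    using A_AE_eq V_A_event image_event by (intro finite_measure_eq_AE) auto
  moreover have "prob {\<omega> \<in> space M. V \<omega> \<in> A \<and> Z \<omega> \<in> C}
      = prob {\<omega> \<in> space M. q (V \<omega>) \<in> B \<and> Z \<omega> \<in> C}"
    using A_AE_eq V_A_event image_event Z_event by (intro finite_measure_eq_AE) auto
  ultimately show ?thesis
    using indep[OF A_borel] by simp
qed

lemma (in prob_space) support_of_distr_subset_closure_density:
  fixes V :: "'a \<Rightarrow> 'b::euclidean_space" and q :: "'b \<Rightarrow> 'b" and Y :: "'a \<Rightarrow> 'b"
    and D Z :: "'a \<Rightarrow> nat" and f :: "'b \<Rightarrow> real"
  assumes V: "V \<in> borel_measurable M" and V_in_U: "AE \<omega> in M. V \<omega> \<in> U"
    and "closed U" "continuous_on U q"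
    and D: "D \<in> measurable M (count_space UNIV)" and Z: "Z \<in> measurable M (count_space UNIV)"
    and AE_D: "AE \<omega> in M. D \<omega> = d" and Y: "\<And>\<omega>. D \<omega> = d \<Longrightarrow> Y \<omega> = q (V \<omega>)"
    and indep: "\<And>A. A \<in> sets borel \<Longrightarrow>
      prob {\<omega> \<in> space M. V \<omega> \<in> A \<and> Z \<omega> \<in> {z}}
        = prob {\<omega> \<in> space M. V \<omega> \<in> A} * prob {\<omega> \<in> space M. Z \<omega> \<in> {z}}"
    and Z_pos: "prob {\<omega> \<in> space M. Z \<omega> = z} > 0"
    and density: "\<And>B. B \<in> sets borel \<Longrightarrow>
      ennreal (prob {\<omega> \<in> space M. Y \<omega> \<in> B \<and> D \<omega> = d \<and> Z \<omega> = z} / prob {\<omega> \<in> space M. Z \<omega> = z})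
        = (\<integral>\<^sup>+ y. indicator B y * ennreal (f y) \<partial>lborel)"
  shows "support_of (distr M borel (\<lambda>\<omega>. q (V \<omega>))) \<subseteq> closure {y. f y > 0}"
proof
  fix y assume y: "y \<in> support_of (distr M borel (\<lambda>\<omega>. q (V \<omega>)))"
  show "y \<in> closure {y. f y > 0}"
  proof (rule mem_closure_pos_if_nn_integral_ball)
    fix r :: real assume "r > 0"
    let ?B = "ball y r"
    have image_pos: "0 < emeasure M {\<omega> \<in> space M. q (V \<omega>) \<in> ?B}"
      using emeasure_preimage_pos_of_mem_support_distr[OF y open_ball, of y r] \<open>r > 0\<close> by simp
    then have image_event: "{\<omega> \<in> space M. q (V \<omega>) \<in> ?B} \<in> events"
      using emeasure_notin_sets by force
    have D_event: "{\<omega> \<in> space M. D \<omega> = d} \<in> events"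
      using D by measurable
    have Z_event: "{\<omega> \<in> space M. Z \<omega> = z} \<in> events"
      using Z by measurable
    have "prob {\<omega> \<in> space M. q (V \<omega>) \<in> ?B \<and> Z \<omega> \<in> {z}}
        = prob {\<omega> \<in> space M. q (V \<omega>) \<in> ?B} * prob {\<omega> \<in> space M. Z \<omega> \<in> {z}}"
      using Z_event by (intro prob_continuous_image_indep[OF V assms(2-4) open_ball image_event] indep) simp_all
    moreover have "prob {\<omega> \<in> space M. q (V \<omega>) \<in> ?B} > 0"
      using image_pos by (simp add: emeasure_eq_measure)
    ultimately have "prob {\<omega> \<in> space M. q (V \<omega>) \<in> ?B \<and> Z \<omega> = z} > 0"
      using Z_pos by simp
    also have "prob {\<omega> \<in> space M. q (V \<omega>) \<in> ?B \<and> Z \<omega> = z}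
        = prob {\<omega> \<in> space M. Y \<omega> \<in> ?B \<and> D \<omega> = d \<and> Z \<omega> = z}"
    proof (rule finite_measure_eq_AE)
      have "{\<omega> \<in> space M. q (V \<omega>) \<in> ?B \<and> Z \<omega> = z}
          = {\<omega> \<in> space M. q (V \<omega>) \<in> ?B} \<inter> {\<omega> \<in> space M. Z \<omega> = z}"
        by blast
      then show "{\<omega> \<in> space M. q (V \<omega>) \<in> ?B \<and> Z \<omega> = z} \<in> events"
        using image_event Z_event by auto
      have "{\<omega> \<in> space M. Y \<omega> \<in> ?B \<and> D \<omega> = d \<and> Z \<omega> = z}
          = {\<omega> \<in> space M. q (V \<omega>) \<in> ?B} \<inter> {\<omega> \<in> space M. D \<omega> = d}
            \<inter> {\<omega> \<in> space M. Z \<omega> = z}"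
        using Y by auto
      then show "{\<omega> \<in> space M. Y \<omega> \<in> ?B \<and> D \<omega> = d \<and> Z \<omega> = z} \<in> events"
        using image_event D_event Z_event by auto
    qed (use AE_D in \<open>auto simp: Y elim!: eventually_mono\<close>)
    finally have "ennreal (prob {\<omega> \<in> space M. Y \<omega> \<in> ?B \<and> D \<omega> = d \<and> Z \<omega> = z}
        / prob {\<omega> \<in> space M. Z \<omega> = z}) \<noteq> 0"
      using Z_pos by (simp add: ennreal_eq_0_iff not_le)
    then show "(\<integral>\<^sup>+ x. indicator ?B x * ennreal (f x) \<partial>lborel) \<noteq> 0"
      using density[of ?B] by (metis borel_open open_ball)
  qed
qed

lemma (in prob_space) AE_ne_if_densities_vanish:
  fixes Y :: "'a \<Rightarrow> 'b::euclidean_space" and D Z :: "'a \<Rightarrow> nat" and g :: "nat \<Rightarrow> 'b \<Rightarrow> real"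
  assumes D: "D \<in> measurable M (count_space UNIV)" and Z: "Z \<in> measurable M (count_space UNIV)"
    and Z_01: "\<And>\<omega>. \<omega> \<in> space M \<Longrightarrow> Z \<omega> \<in> {0,1}"
    and Z_pos: "\<And>z. z \<in> {0,1} \<Longrightarrow> prob {\<omega> \<in> space M. Z \<omega> = z} > 0"
    and density: "\<And>z B. z \<in> {0,1} \<Longrightarrow> B \<in> sets borel \<Longrightarrow>
      ennreal (prob {\<omega> \<in> space M. Y \<omega> \<in> B \<and> D \<omega> = e \<and> Z \<omega> = z} / prob {\<omega> \<in> space M. Z \<omega> = z})
        = (\<integral>\<^sup>+ y. indicator B y * ennreal (g z y) \<partial>lborel)"
    and vanish: "\<And>z y. z \<in> {0,1} \<Longrightarrow> g z y = 0"
  shows "AE \<omega> in M. D \<omega> \<noteq> e"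
proof -
  have "prob {\<omega> \<in> space M. D \<omega> = e \<and> Z \<omega> = z} = 0" (is "prob ?A = 0")
    if z: "z \<in> {0,1}" for z
  proof -
    have "(\<integral>\<^sup>+ y. indicator UNIV y * ennreal (g z y) \<partial>lborel) = 0"
      using vanish[OF z] by simp
    then have "prob ?A \<le> 0"
      using density[OF z, of UNIV] Z_pos[OF z] by (simp add: ennreal_eq_0_iff divide_le_0_iff)
    then show ?thesis
      using measure_nonneg[of M ?A] by linarith
  qed
  moreover have "{\<omega> \<in> space M. D \<omega> = e \<and> Z \<omega> = z} \<in> events" for z
    using D Z by measurable
  ultimately have "AE \<omega> in M. \<not> (D \<omega> = e \<and> Z \<omega> = z)" if "z \<in> {0,1}" for z
    using that by (subst AE_iff_measurable[OF _ refl]) (auto simp: emeasure_eq_measure)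
  from this[of 0, simplified] this[of 1, simplified] show ?thesis
    using AE_space by eventually_elim (use Z_01 in fastforce)
qed

theorem mainTheorem12:
  fixes M :: "'o measure" and N :: "'v measure"
    and \<mu> :: "'a::euclidean_space measure" and \<U> :: "'a set"
    and U :: "nat \<Rightarrow> 'o \<Rightarrow> 'a" and Z :: "'o \<Rightarrow> nat" and \<nu> :: "'o \<Rightarrow> 'v"
    and \<delta> :: "nat \<Rightarrow> 'v \<Rightarrow> nat"
    and q :: "nat \<Rightarrow> 'a \<Rightarrow> 'a" and Dq :: "nat \<Rightarrow> 'a \<Rightarrow> ('a \<Rightarrow>\<^sub>L 'a)"
    and f :: "nat \<Rightarrow> nat \<Rightarrow> 'a \<Rightarrow> real"
    and lam_lo lam_hi :: real
  defines "D \<equiv> (\<lambda>\<omega>. \<delta> (Z \<omega>) (\<nu> \<omega>))"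
    and "Y \<equiv> (\<lambda>\<omega>. q (\<delta> (Z \<omega>) (\<nu> \<omega>)) (U (\<delta> (Z \<omega>) (\<nu> \<omega>)) \<omega>))"
    and "\<Y> \<equiv> (\<lambda>d. support_of (distr M borel (\<lambda>\<omega>. q d (U d \<omega>))))"
  assumes M: "prob_space M"
    and lam: "0 < lam_lo" "lam_lo < lam_hi"
    and U_set: "compact \<U>" "convex \<U>" "piecewise_C1_boundary \<U>"
    and mu: "sets \<mu> = sets borel" "prob_space \<mu>" "absolutely_continuous lborel \<mu>"
            "support_of \<mu> = \<U>"
    and A1: "\<forall>d\<in>{0,1}. U d \<in> borel_measurable M \<and> distr M borel (U d) = \<mu>"
    and Z_meas: "Z \<in> measurable M (count_space UNIV)" "\<forall>\<omega>\<in>space M. Z \<omega> \<in> {0,1}"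
    and A2: "\<forall>d\<in>{0,1}. \<forall>A\<in>sets borel. \<forall>B::nat set.
               measure M {\<omega>\<in>space M. U d \<omega> \<in> A \<and> Z \<omega> \<in> B}
               = measure M {\<omega>\<in>space M. U d \<omega> \<in> A} * measure M {\<omega>\<in>space M. Z \<omega> \<in> B}"
    and A3: "\<nu> \<in> measurable M N"
            "(\<lambda>(z,v). \<delta> z v) \<in> measurable (count_space UNIV \<Otimes>\<^sub>M N) (count_space UNIV)"
            "\<forall>z\<in>{0,1}. \<forall>v\<in>space N. \<delta> z v \<in> {0,1}"
    and A4: "cond_ident_distr M
               (vimage_algebra (space M) (\<lambda>\<omega>. (Z \<omega>, \<nu> \<omega>)) (count_space UNIV \<Otimes>\<^sub>M N))
               (U 0) (U 1)"
    and As2: "\<forall>d\<in>{0,1}. (\<forall>u\<in>\<U>. (q d has_derivative blinfun_apply (Dq d u)) (at u within \<U>))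
               \<and> C1_on \<U> (Dq d) \<and> (\<forall>u\<in>\<U>. sym_pd_eig_between lam_lo lam_hi (Dq d u))"
    and As3: "\<forall>d\<in>{0,1}. compact (\<Y> d) \<and> convex (\<Y> d) \<and> piecewise_C2_boundary (\<Y> d)"
    and Zpos: "\<forall>z\<in>{0,1}. measure M {\<omega>\<in>space M. Z \<omega> = z} > 0"
    and dens: "\<forall>d\<in>{0,1}. \<forall>z\<in>{0,1}. f d z \<in> borel_measurable borel \<and> (\<forall>y. f d z y \<ge> 0)
               \<and> (\<forall>B\<in>sets borel.
                    ennreal (measure M {\<omega>\<in>space M. Y \<omega> \<in> B \<and> D \<omega> = d \<and> Z \<omega> = z}
                             / measure M {\<omega>\<in>space M. Z \<omega> = z})
                    = (\<integral>\<^sup>+ y. indicator B y * ennreal (f d z y) \<partial>lborel))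
               \<and> (\<forall>y. y \<notin> \<Y> d \<longrightarrow> f d z y = 0)"
    and As4: "\<forall>d\<in>{0,1}. \<forall>z\<in>{0,1}. C1_on (\<Y> d) (f d z)"
    and ineq: "AE y in (lborel :: ('a \<times> 'a) measure).
                 fst y \<in> \<Y> 0 \<and> snd y \<in> \<Y> 1 \<longrightarrow>
                 4 * f 0 0 (fst y) * f 1 1 (snd y)
                   > (lam_hi / lam_lo) ^ (DIM('a) + 1) * (f 0 1 (fst y) + f 1 0 (snd y))\<^sup>2"
  shows "\<forall>d\<in>{0,1}. \<Y> d = (\<Union>z\<in>{0,1}. closure {y. f d z y > 0})"
proof -
  interpret prob_space M by (rule M)
  have U_d: "U d \<in> borel_measurable M" "AE \<omega> in M. U d \<omega> \<in> \<U>"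
    "absolutely_continuous lborel (distr M borel (U d))" if "d \<in> {0,1}" for d
    using A1 AE_in_support_of_distr_measurable[of "U d" M] mu(3,4) that by auto
  have q_deriv: "\<And>u. u \<in> \<U> \<Longrightarrow> (q d has_derivative Dq d u) (at u within \<U>)"
    and Dq_cont: "continuous_on \<U> (Dq d)"
    and Dq_pos_def: "\<And>u x. u \<in> \<U> \<Longrightarrow> x \<noteq> 0 \<Longrightarrow> Dq d u x \<bullet> x > 0"
    if "d \<in> {0,1}" for d
    using As2 that C1_on_imp_continuous_on by (auto simp: sym_pd_eig_between_def)
  have f_nonneg: "f d z y \<ge> 0" and f_out: "y \<notin> \<Y> d \<Longrightarrow> f d z y = 0"
    and density: "B \<in> sets borel \<Longrightarrow>
      ennreal (prob {\<omega> \<in> space M. Y \<omega> \<in> B \<and> D \<omega> = d \<and> Z \<omega> = z} / prob {\<omega> \<in> space M. Z \<omega> = z})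
        = (\<integral>\<^sup>+ y. indicator B y * ennreal (f d z y) \<partial>lborel)"
    if "d \<in> {0,1}" "z \<in> {0,1}" for d z y B
    using dens that by blast+
  have D_meas: "D \<in> measurable M (count_space UNIV)"
    using measurable_comp[OF measurable_Pair[OF Z_meas(1) A3(1)] A3(2)] by (simp add: D_def o_def)
  have D_01: "D \<omega> \<in> {0,1}" if "\<omega> \<in> space M" for \<omega>
    using A3(3) Z_meas(2) measurable_space[OF A3(1) that] that unfolding D_def by blast
  have interior_nonempty: "interior (\<Y> d) \<noteq> {}" if d: "d \<in> {0,1}" and "\<Y> d \<noteq> {}" for d
    using interior_support_of_distr_nonempty[OF U_d[OF d] U_set(1,2) q_deriv[OF d] Dq_cont[OF d]
        Dq_pos_def[OF d]] As3 d \<open>\<Y> d \<noteq> {}\<close> by (auto simp: \<Y>_def)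
  have "\<Y> d \<subseteq> closure {y. f d 0 y > 0} \<union> closure {y. f d 1 y > 0}" if d: "d \<in> {0,1}" for d
  proof (cases "\<Y> (1 - d) = {}")
    case False
    have "\<Y> d \<subseteq> closure {y. f d d y > 0}"
    proof (cases "\<Y> d = {}")
      case False
      then have "interior (\<Y> k) \<noteq> {}" if "k \<in> {0,1}" for k
        using interior_nonempty \<open>\<Y> (1 - d) \<noteq> {}\<close> that d by fastforce
      then show ?thesis
        using subset_closure_diagonal_density[OF ineq _ _ _ _ d] lam f_nonneg As3 by auto
    qed simp
    then show ?thesis
      using d by auto
  next
    case True
    \<comment> \<open>Laws of random variables have nonempty support, so this case only arises when
      q (1 - d) \<circ> U (1 - d) is not measurable.\<close>
    have "AE \<omega> in M. D \<omega> \<noteq> 1 - d"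
      by (rule AE_ne_if_densities_vanish[OF D_meas Z_meas(1), where Y = Y and g = "f (1 - d)"])
        (use Z_meas(2) Zpos density f_out True d in auto)
    then have AE_D: "AE \<omega> in M. D \<omega> = d"
      using AE_space by eventually_elim (use D_01 d in fastforce)
    have "\<Y> d \<subseteq> closure {y. f d 0 y > 0}"
      unfolding \<Y>_def
    proof (rule support_of_distr_subset_closure_density[OF U_d(1,2)[OF d]
          compact_imp_closed[OF U_set(1)] has_derivative_continuous_on[OF q_deriv[OF d]]
          D_meas Z_meas(1) AE_D])
      show "Y \<omega> = q d (U d \<omega>)" if "D \<omega> = d" for \<omega>
        using that by (simp add: Y_def D_def)
      show "prob {\<omega> \<in> space M. U d \<omega> \<in> A \<and> Z \<omega> \<in> {0}}
          = prob {\<omega> \<in> space M. U d \<omega> \<in> A} * prob {\<omega> \<in> space M. Z \<omega> \<in> {0}}"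
        if "A \<in> sets borel" for A
        using A2 d that by blast
    qed (use Zpos density d in auto)
    then show ?thesis
      by blast
  qed
  moreover have "closure {y. f d z y > 0} \<subseteq> \<Y> d" if "d \<in> {0,1}" "z \<in> {0,1}" for d z
  proof (rule closure_minimal)
    show "{y. f d z y > 0} \<subseteq> \<Y> d"
      using f_out[OF that] by (metis less_irrefl mem_Collect_eq subsetI)
    show "closed (\<Y> d)"
      unfolding \<Y>_def by (rule closed_support_of)
  qed
  ultimately show ?thesis
    by (simp add: subset_antisym)
qed

end
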